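(* Let $\beta\in C^0[0,1]$ with $\bar\beta=\|\beta\|_\infty$, let $k=\mathcal{K}(\beta)$ be the exact backstepping kernel, and let $\hat k\in C^0[0,1]$ satisfy $|k(x)-\hat k(x)|<\epsilon$ for all $x\in[0,1]$. Then the kernel $\hat l$ of the inverse of the transformation $\hat w(x)=u(x)-\int_0^x\hat k(x-y)u(y)\,dy$, namely the function with $u(x)=\hat w(x)+\int_0^x\hat l(x-y)\hat w(y)\,dy$, satisfies for all $x\in[0,1]$ $$|\hat l(x)|\le\big(\bar\beta+(1+\bar\beta)\epsilon\big)e^{(1+\bar\beta)\epsilon x}.$$
   Context: The backstepping kernel operator $\mathcal{K}$ maps $\beta\in C^0[0,1]$ to the solution $k$ of $k(x)=-\beta(x)+\int_0^x\beta(x-y)k(y)\,dy$, $x\in[0,1]$. $\|\cdot\|_\infty$ is the supremum norm on $[0,1]$. *)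

theory Defs
  imports "HOL-Analysis.Analysis"
begin

definition is_backstepping_kernel :: "(real \<Rightarrow> real) \<Rightarrow> (real \<Rightarrow> real) \<Rightarrow> bool" where
  "is_backstepping_kernel \<beta> k \<longleftrightarrow> continuous_on {0..1} k \<and>
     (\<forall>x\<in>{0..1}. k x = - \<beta> x + integral {0..x} (\<lambda>y. \<beta> (x - y) * k y))"

definition volterra_transform :: "(real \<Rightarrow> real) \<Rightarrow> (real \<Rightarrow> real) \<Rightarrow> real \<Rightarrow> real" where
  "volterra_transform kh u x = u x - integral {0..x} (\<lambda>y. kh (x - y) * u y)"

definition is_inverse_kernel :: "(real \<Rightarrow> real) \<Rightarrow> (real \<Rightarrow> real) \<Rightarrow> bool" where
  "is_inverse_kernel kh l \<longleftrightarrow> continuous_on {0..1} l \<and>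
     (\<forall>u. continuous_on {0..1} u \<longrightarrow>
        (\<forall>x\<in>{0..1}. u x = volterra_transform kh u x
            + integral {0..x} (\<lambda>y. l (x - y) * volterra_transform kh u y)))"

definition sup_norm01 :: "(real \<Rightarrow> real) \<Rightarrow> real" where
  "sup_norm01 f = (SUP x\<in>{0..1}. \<bar>f x\<bar>)"

end

theory Submission
  imports Defs
begin

(* Write f * g for the Volterra convolution (f * g)(x) = int_0^x f(x - y) g(y) dy on [0,1] and
   delta for its formal unit. The kernel equation says delta - k = (delta - beta)^-1, and testing
   the inverse-kernel property against all u gives delta + l = (delta - kh)^-1. With e = k - kh and
   g = e - beta * e this yields delta - beta = (delta + g) * (delta + l), i.e. l = -beta - g - g * l.
   Since |g| <= (1 + |beta|_oo) eps, Gronwall's inequality bounds l. *)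

lemma lborel_integral_indicator_Icc:
  fixes f :: "real \<Rightarrow> real"
  assumes "continuous_on {a..b} f"
  shows "(\<integral>t. indicator {a..b} t * f t \<partial>lborel) = integral {a..b} f"
  using set_borel_integral_eq_integral(2)[OF borel_integrable_atLeastAtMost'[OF assms]]
  by (simp add: set_lebesgue_integral_def)

definition triangle :: "real \<Rightarrow> (real \<times> real) set" where
  "triangle x = {(y, s). 0 \<le> s \<and> s \<le> y \<and> y \<le> x}"

lemma compact_triangle: "compact (triangle x)"
proof -
  have "triangle x = {p. 0 \<le> snd p \<and> snd p \<le> fst p \<and> fst p \<le> x}"
    unfolding triangle_def by auto
  then have "closed (triangle x)"
    by (simp add: closed_Collect_conj closed_Collect_le continuous_on_fst continuous_on_snd
        continuous_on_const)
  moreover have "triangle x \<subseteq> cbox (0, 0) (x, x)"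
    unfolding triangle_def by (auto simp: cbox_Pair_eq)
  ultimately show ?thesis
    by (metis bounded_cbox bounded_subset compact_eq_bounded_closed)
qed

lemma integrable_indicator_triangle:
  fixes F :: "real \<Rightarrow> real \<Rightarrow> real"
  assumes "continuous_on (triangle x) (\<lambda>(y, s). F y s)"
  shows "integrable (lborel \<Otimes>\<^sub>M lborel) (\<lambda>(y, s). indicator (triangle x) (y, s) * F y s)"
proof -
  have "integrable lborel (\<lambda>p. indicator (triangle x) p *\<^sub>R (\<lambda>(y, s). F y s) p)"
    using assms compact_triangle by (rule borel_integrable_compact[rotated])
  then show ?thesis
    unfolding lborel_prod by (simp add: case_prod_unfold)
qed

lemma integral_triangle_swap:
  fixes F :: "real \<Rightarrow> real \<Rightarrow> real"
  assumes cont: "continuous_on (triangle x) (\<lambda>(y, s). F y s)"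
  shows "integral {0..x} (\<lambda>y. integral {0..y} (F y))
       = integral {0..x} (\<lambda>s. integral {s..x} (\<lambda>y. F y s))"
proof -
  define G where "G = (\<lambda>y s. indicator (triangle x) (y, s) * F y s)"
  have int: "integrable (lborel \<Otimes>\<^sub>M lborel) (\<lambda>(y, s). G y s)"
    unfolding G_def using integrable_indicator_triangle[OF cont] .
  have slice_y: "(\<integral>s. G y s \<partial>lborel) = indicator {0..x} y * integral {0..y} (F y)" for y
  proof (cases "y \<in> {0..x}")
    case True
    have "continuous_on {0..y} (F y)"
      by (rule continuous_on_compose2[OF cont, of _ "\<lambda>s. (y, s)", simplified])
        (use True in \<open>auto simp: triangle_def intro!: continuous_intros\<close>)
    moreover have "G y s = indicator {0..y} s * F y s" for s
      using True by (auto simp: G_def triangle_def indicator_def)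
    ultimately show ?thesis
      using True by (simp add: lborel_integral_indicator_Icc)
  next
    case False
    then have "G y s = 0" for s
      by (auto simp: G_def triangle_def)
    then show ?thesis
      using False by simp
  qed
  have slice_s: "(\<integral>y. G y s \<partial>lborel) = indicator {0..x} s * integral {s..x} (\<lambda>y. F y s)" for s
  proof (cases "s \<in> {0..x}")
    case True
    have "continuous_on {s..x} (\<lambda>y. F y s)"
      by (rule continuous_on_compose2[OF cont, of _ "\<lambda>y. (y, s)", simplified])
        (use True in \<open>auto simp: triangle_def intro!: continuous_intros\<close>)
    moreover have "G y s = indicator {s..x} y * F y s" for y
      using True by (auto simp: G_def triangle_def indicator_def)
    ultimately show ?thesis
      using True by (simp add: lborel_integral_indicator_Icc)
  next
    case False
    then have "G y s = 0" for y
      by (auto simp: G_def triangle_def)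
    then show ?thesis
      using False by simp
  qed
  have "set_integrable lborel {0..x} (\<lambda>y. integral {0..y} (F y))"
    using lborel_pair.integrable_fst[OF int] by (simp add: set_integrable_def slice_y)
  then have "integral {0..x} (\<lambda>y. integral {0..y} (F y)) = (\<integral>y. (\<integral>s. G y s \<partial>lborel) \<partial>lborel)"
    by (simp add: set_borel_integral_eq_integral(2)[symmetric] set_lebesgue_integral_def slice_y)
  also have "\<dots> = (\<integral>s. (\<integral>y. G y s \<partial>lborel) \<partial>lborel)"
    using lborel_pair.Fubini_integral[OF int] by simp
  also have "\<dots> = integral {0..x} (\<lambda>s. integral {s..x} (\<lambda>y. F y s))"
  proof -
    have "set_integrable lborel {0..x} (\<lambda>s. integral {s..x} (\<lambda>y. F y s))"
      using lborel_pair.integrable_snd[OF int] by (simp add: set_integrable_def slice_s)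
    then show ?thesis
      by (simp add: set_borel_integral_eq_integral(2)[symmetric] set_lebesgue_integral_def slice_s)
  qed
  finally show ?thesis .
qed

definition conv :: "(real \<Rightarrow> real) \<Rightarrow> (real \<Rightarrow> real) \<Rightarrow> real \<Rightarrow> real" where
  "conv f g x = integral {0..x} (\<lambda>y. f (x - y) * g y)"

lemma continuous_on_reflect_Icc:
  fixes f :: "real \<Rightarrow> real"
  assumes "continuous_on {0..1} f" "x \<in> {0..1}"
  shows "continuous_on {0..x} (\<lambda>y. f (x - y))"
  by (rule continuous_on_compose2[OF assms(1)]) (use assms(2) in \<open>auto intro!: continuous_intros\<close>)

lemma conv_integrable:
  fixes f g :: "real \<Rightarrow> real"
  assumes "continuous_on {0..1} f" "continuous_on {0..1} g" "x \<in> {0..1}"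
  shows "(\<lambda>y. f (x - y) * g y) integrable_on {0..x}"
proof -
  have "continuous_on {0..x} g"
    using assms(2,3) by (auto intro: continuous_on_subset)
  with continuous_on_reflect_Icc[OF assms(1,3)] show ?thesis
    by (intro integrable_continuous_interval continuous_on_mult)
qed

lemma integral_Icc_rescale:
  fixes h :: "real \<Rightarrow> real"
  assumes "x \<ge> 0"
  shows "integral {0..x} h = x * integral {0..1} (\<lambda>t. h (x * t))"
proof (cases "x = 0")
  case False
  with assms have "(\<lambda>t. t / x) ` {0..x} = {0..1}"
    by (auto simp: image_iff field_simps intro!: bexI[where x="x * _"] mult_left_le)
  then have "integral {0..1} (\<lambda>t. h (x * t)) = (1 / \<bar>x\<bar>) *\<^sub>R integral {0..x} h"
    using integral_stretch_real[of x 0 x h] False by simp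
  with assms False show ?thesis
    by simp
qed simp

lemma continuous_on_conv:
  assumes f: "continuous_on {0..1} f" and g: "continuous_on {0..1} g"
  shows "continuous_on {0..1} (conv f g)"
proof -
  (* Substituting y = x * t moves the parameter x out of the domain of integration. *)
  have "continuous_on ({0..1} \<times> cbox 0 1) (\<lambda>(x, t). f (x - x * t) * g (x * t))"
  proof -
    have diff_mem: "x - x * t \<in> {0..1}" if "x \<in> {0..1}" "t \<in> {0..1}" for x t :: real
      using that by (auto simp: mult_left_le) (smt (verit) mult_nonneg_nonneg)
    have "continuous_on ({0..1} \<times> cbox 0 1) (\<lambda>p::real \<times> real. f (fst p - fst p * snd p))"
      by (rule continuous_on_compose2[OF f])
        (auto intro!: continuous_intros diff_mem)
    moreover have "continuous_on ({0..1} \<times> cbox 0 1) (\<lambda>p::real \<times> real. g (fst p * snd p))"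
      by (rule continuous_on_compose2[OF g]) (auto intro!: continuous_intros simp: mult_le_one)
    ultimately show ?thesis
      by (simp add: case_prod_beta continuous_on_mult)
  qed
  then have "continuous_on {0..1} (\<lambda>x. x * integral (cbox 0 1) (\<lambda>t. f (x - x * t) * g (x * t)))"
    using integral_continuous_on_param[where f="\<lambda>x t. f (x - x * t) * g (x * t)"]
    by (intro continuous_intros) auto
  moreover have "x * integral (cbox 0 1) (\<lambda>t. f (x - x * t) * g (x * t)) = conv f g x"
    if "x \<in> {0..1}" for x
    using that by (simp add: conv_def integral_Icc_rescale[of x])
  ultimately show ?thesis
    by (rule continuous_on_eq)
qed

lemma integral_reflect_Icc:
  fixes h :: "real \<Rightarrow> real"
  shows "integral {0..x} (\<lambda>y. h (x - y)) = integral {0..x} h"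
proof -
  have "integral {0..x} (\<lambda>y. h (x - y)) = integral {-x..0} (\<lambda>y. h (y + x))"
    using Henstock_Kurzweil_Integration.integral_reflect_real[of 0 "-x" "\<lambda>y. h (y + x)"]
    by (simp add: algebra_simps)
  also have "\<dots> = integral {0..x} h"
    using integral_shift_real_ivl[of 0 x x h] by simp
  finally show ?thesis .
qed

lemma conv_commute: "conv f g x = conv g f x"
  unfolding conv_def
  using integral_reflect_Icc[of x "\<lambda>y. f y * g (x - y)"] by (simp add: mult.commute)

lemma conv_cong:
  assumes "\<And>t. t \<in> {0..1} \<Longrightarrow> f t = f' t" "\<And>t. t \<in> {0..1} \<Longrightarrow> g t = g' t" "x \<in> {0..1}"
  shows "conv f g x = conv f' g' x"
  unfolding conv_def using assms by (intro integral_cong) auto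

lemma conv_add_left:
  assumes "continuous_on {0..1} f" "continuous_on {0..1} f'" "continuous_on {0..1} g" "x \<in> {0..1}"
  shows "conv (\<lambda>t. f t + f' t) g x = conv f g x + conv f' g x"
  unfolding conv_def using conv_integrable[OF assms(1,3,4)] conv_integrable[OF assms(2,3,4)]
  by (simp add: distrib_right integral_add)

lemma conv_diff_left:
  assumes "continuous_on {0..1} f" "continuous_on {0..1} f'" "continuous_on {0..1} g" "x \<in> {0..1}"
  shows "conv (\<lambda>t. f t - f' t) g x = conv f g x - conv f' g x"
  unfolding conv_def using conv_integrable[OF assms(1,3,4)] conv_integrable[OF assms(2,3,4)]
  by (simp add: left_diff_distrib integral_diff)

lemma conv_add_right:
  assumes "continuous_on {0..1} f" "continuous_on {0..1} g" "continuous_on {0..1} g'" "x \<in> {0..1}"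
  shows "conv f (\<lambda>t. g t + g' t) x = conv f g x + conv f g' x"
  unfolding conv_def using conv_integrable[OF assms(1,2,4)] conv_integrable[OF assms(1,3,4)]
  by (simp add: distrib_left integral_add)

lemma conv_diff_right:
  assumes "continuous_on {0..1} f" "continuous_on {0..1} g" "continuous_on {0..1} g'" "x \<in> {0..1}"
  shows "conv f (\<lambda>t. g t - g' t) x = conv f g x - conv f g' x"
  unfolding conv_def using conv_integrable[OF assms(1,2,4)] conv_integrable[OF assms(1,3,4)]
  by (simp add: right_diff_distrib integral_diff)

lemma conv_assoc:
  assumes f: "continuous_on {0..1} f" and g: "continuous_on {0..1} g" and h: "continuous_on {0..1} h"
    and x: "x \<in> {0..1}"
  shows "conv (conv f g) h x = conv f (conv g h) x"
proof -
  define F where "F = (\<lambda>y s. f (x - y) * g (y - s) * h s)"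
  have "continuous_on (triangle x) (\<lambda>(y, s). F y s)"
  proof -
    have "continuous_on (triangle x) (\<lambda>p. f (x - fst p))"
      by (rule continuous_on_compose2[OF f])
        (use x in \<open>auto simp: triangle_def intro!: continuous_intros\<close>)
    moreover have "continuous_on (triangle x) (\<lambda>p. g (fst p - snd p))"
      by (rule continuous_on_compose2[OF g])
        (use x in \<open>auto simp: triangle_def intro!: continuous_intros\<close>)
    moreover have "continuous_on (triangle x) (\<lambda>p. h (snd p))"
      by (rule continuous_on_compose2[OF h])
        (use x in \<open>auto simp: triangle_def intro!: continuous_intros\<close>)
    ultimately show ?thesis
      unfolding F_def by (simp add: case_prod_beta continuous_on_mult)
  qed
  then have "conv f (conv g h) x = integral {0..x} (\<lambda>s. integral {s..x} (\<lambda>y. F y s))"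
    by (simp add: conv_def F_def mult.assoc flip: integral_triangle_swap)
  also have "\<dots> = conv (conv f g) h x"
    unfolding conv_def
  proof (rule integral_cong)
    fix s
    have "integral {s..x} (\<lambda>y. F y s) = integral {s - s..x - s} (\<lambda>z. F (z + s) s)"
      by (rule integral_shift_real_ivl[symmetric])
    also have "\<dots> = integral {0..x - s} (\<lambda>z. f (x - s - z) * g z * h s)"
      by (simp add: F_def algebra_simps)
    also have "\<dots> = integral {0..x - s} (\<lambda>z. f (x - s - z) * g z) * h s"
      by (rule integral_mult_left)
    finally show "integral {s..x} (\<lambda>y. F y s) = integral {0..x - s} (\<lambda>y. f (x - s - y) * g y) * h s" .
  qed
  finally show ?thesis ..
qed

lemma abs_conv_le:
  fixes f g :: "real \<Rightarrow> real"
  assumes f: "continuous_on {0..1} f" and g: "continuous_on {0..1} g" and x: "x \<in> {0..1}"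
    and f_bound: "\<And>t. t \<in> {0..1} \<Longrightarrow> \<bar>f t\<bar> \<le> a"
  shows "\<bar>conv f g x\<bar> \<le> a * integral {0..x} (\<lambda>y. \<bar>g y\<bar>)"
proof -
  have "continuous_on {0..x} g"
    using g x by (auto intro: continuous_on_subset)
  then have "(\<lambda>y. a * \<bar>g y\<bar>) integrable_on {0..x}"
    by (intro integrable_continuous_interval continuous_intros)
  then have "norm (conv f g x) \<le> integral {0..x} (\<lambda>y. a * \<bar>g y\<bar>)"
    unfolding conv_def
  proof (rule integral_norm_bound_integral[OF conv_integrable[OF f g x]])
    fix y assume "y \<in> {0..x}"
    with x have "\<bar>f (x - y)\<bar> \<le> a"
      by (intro f_bound) auto
    then show "norm (f (x - y) * g y) \<le> a * \<bar>g y\<bar>"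
      by (simp add: abs_mult mult_right_mono)
  qed
  then show ?thesis
    by simp
qed

lemma abs_conv_le_mult:
  fixes f g :: "real \<Rightarrow> real"
  assumes f: "continuous_on {0..1} f" and g: "continuous_on {0..1} g" and x: "x \<in> {0..1}"
    and f_bound: "\<And>t. t \<in> {0..1} \<Longrightarrow> \<bar>f t\<bar> \<le> a"
    and g_bound: "\<And>t. t \<in> {0..1} \<Longrightarrow> \<bar>g t\<bar> \<le> b"
  shows "\<bar>conv f g x\<bar> \<le> a * b"
proof -
  have "0 \<le> a" "0 \<le> b"
    using f_bound[of 0] g_bound[of 0] by auto
  have "integral {0..x} (\<lambda>y. \<bar>g y\<bar>) \<le> integral {0..x} (\<lambda>y. b)"
  proof (rule integral_le)
    show "(\<lambda>y. \<bar>g y\<bar>) integrable_on {0..x}"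
      using g x by (intro integrable_continuous_interval continuous_intros)
        (auto intro: continuous_on_subset)
  qed (use g_bound x in auto)
  also have "\<dots> \<le> b"
    using x \<open>0 \<le> b\<close> by (simp add: mult_left_le_one_le)
  finally have "a * integral {0..x} (\<lambda>y. \<bar>g y\<bar>) \<le> a * b"
    using \<open>0 \<le> a\<close> by (rule mult_left_mono)
  with abs_conv_le[OF f g x f_bound] show ?thesis
    by linarith
qed

lemma eq_0_if_conv_eq_0:
  assumes h: "continuous_on {0..1} h"
    and conv_0: "\<And>u. continuous_on {0..1} u \<Longrightarrow> conv h u 1 = 0"
    and t: "t \<in> {0..1}"
  shows "h t = 0"
proof -
  define u where "u = (\<lambda>y. h (1 - y))"
  have "continuous_on {0..1} u"
    unfolding u_def by (rule continuous_on_compose2[OF h]) (auto intro!: continuous_intros)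
  then have cont: "continuous_on (cbox 0 1) (\<lambda>y. u y * u y)"
    by (auto intro!: continuous_intros)
  have "integral {0..1} (\<lambda>y. u y * u y) = 0"
    using conv_0[OF \<open>continuous_on {0..1} u\<close>] unfolding conv_def u_def by simp
  then have int_0: "((\<lambda>y. u y * u y) has_integral 0) (cbox 0 1)"
    using integrable_continuous[OF cont] by (metis has_integral_integral interval_cbox)
  have "u (1 - t) * u (1 - t) = 0"
    by (rule has_integral_0_cbox_imp_0[OF cont _ int_0]) (use t in auto)
  then show ?thesis
    unfolding u_def by simp
qed

lemma inverse_kernel_resolvent_eq:
  assumes kh: "continuous_on {0..1} kh" and inv: "is_inverse_kernel kh l" and x: "x \<in> {0..1}"
  shows "l x = kh x + conv l kh x"
proof -
  have l: "continuous_on {0..1} l"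
    and inverse: "\<And>u z. continuous_on {0..1} u \<Longrightarrow> z \<in> {0..1} \<Longrightarrow>
       u z = (u z - conv kh u z) + conv l (\<lambda>y. u y - conv kh u y) z"
    using inv unfolding is_inverse_kernel_def volterra_transform_def conv_def by auto
  have lkh: "continuous_on {0..1} (conv l kh)"
    by (rule continuous_on_conv[OF l kh])
  have "conv (\<lambda>t. l t - kh t - conv l kh t) u 1 = 0" if u: "continuous_on {0..1} u" for u
  proof -
    have khu: "continuous_on {0..1} (conv kh u)"
      by (rule continuous_on_conv[OF kh u])
    have "conv kh u 1 = conv l (\<lambda>y. u y - conv kh u y) 1"
      using inverse[OF u, of 1] by simp
    also have "\<dots> = conv l u 1 - conv (conv l kh) u 1"
      using conv_diff_right[OF l u khu] conv_assoc[OF l kh u] by simp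
    moreover have "conv (\<lambda>t. l t - kh t - conv l kh t) u 1
        = conv l u 1 - conv kh u 1 - conv (conv l kh) u 1"
      using conv_diff_left[OF continuous_on_diff[OF l kh] lkh u] conv_diff_left[OF l kh u] by simp
    ultimately show ?thesis
      by simp
  qed
  then have "l x - kh x - conv l kh x = 0"
    using eq_0_if_conv_eq_0[where h="\<lambda>t. l t - kh t - conv l kh t", OF _ _ x]
      continuous_on_diff[OF continuous_on_diff[OF l kh] lkh] by blast
  then show ?thesis
    by simp
qed

lemma perturbed_resolvent_eq:
  assumes \<beta>: "continuous_on {0..1} \<beta>" and k: "continuous_on {0..1} k"
    and kh: "continuous_on {0..1} kh" and l: "continuous_on {0..1} l"
    and k_eq: "\<And>x. x \<in> {0..1} \<Longrightarrow> k x = - \<beta> x + conv \<beta> k x"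
    and l_eq: "\<And>x. x \<in> {0..1} \<Longrightarrow> l x = kh x + conv l kh x"
    and x: "x \<in> {0..1}"
  defines "g \<equiv> \<lambda>t. (k t - kh t) - conv \<beta> (\<lambda>s. k s - kh s) t"
  shows "l x = - \<beta> x - g x - conv g l x"
proof -
  define e where "e = (\<lambda>t. k t - kh t)"
  have g_eq: "g = (\<lambda>t. e t - conv \<beta> e t)"
    unfolding g_def e_def ..
  have e: "continuous_on {0..1} e"
    unfolding e_def by (intro continuous_on_diff k kh)
  have \<beta>e: "continuous_on {0..1} (conv \<beta> e)"
    by (rule continuous_on_conv[OF \<beta> e])
  have el: "conv e l t = conv k l t - l t + kh t" if t: "t \<in> {0..1}" for t
  proof -
    have "conv e l t = conv k l t - conv kh l t"
      unfolding e_def by (rule conv_diff_left[OF k kh l t])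
    moreover have "conv kh l t = l t - kh t"
      using l_eq[OF t] conv_commute[of kh l t] by simp
    ultimately show ?thesis
      by simp
  qed
  have kl: "continuous_on {0..1} (conv k l)"
    by (rule continuous_on_conv[OF k l])
  have "conv \<beta> (conv e l) x = conv \<beta> (\<lambda>t. conv k l t - l t + kh t) x"
    by (rule conv_cong) (use el x in auto)
  also have "\<dots> = conv \<beta> (conv k l) x - conv \<beta> l x + conv \<beta> kh x"
    using conv_add_right[OF \<beta> continuous_on_diff[OF kl l] kh x] conv_diff_right[OF \<beta> kl l x]
    by simp
  also have "conv \<beta> (conv k l) x = conv (\<lambda>t. k t + \<beta> t) l x"
    using conv_assoc[OF \<beta> k l x] conv_cong[of "conv \<beta> k" "\<lambda>t. k t + \<beta> t" l l x] k_eq x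
    by simp
  also have "\<dots> = conv k l x + conv \<beta> l x"
    by (rule conv_add_left[OF k \<beta> l x])
  finally have \<beta>el: "conv \<beta> (conv e l) x = conv k l x + conv \<beta> kh x"
    by simp
  have "conv g l x = conv e l x - conv \<beta> (conv e l) x"
    unfolding g_eq using conv_diff_left[OF e \<beta>e l x] conv_assoc[OF \<beta> e l x] by simp
  moreover have "conv \<beta> e x = conv \<beta> k x - conv \<beta> kh x"
    unfolding e_def by (rule conv_diff_right[OF \<beta> k kh x])
  ultimately show ?thesis
    using el[OF x] \<beta>el k_eq[OF x] unfolding g_eq e_def by simp
qed

lemma gronwall_integral:
  fixes v :: "real \<Rightarrow> real"
  assumes v: "continuous_on {0..b} v" and B: "B > 0"
    and ineq: "\<And>x. x \<in> {0..b} \<Longrightarrow> v x \<le> A + B * integral {0..x} v"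
    and x: "x \<in> {0..b}"
  shows "v x \<le> A * exp (B * x)"
proof -
  define \<phi> where "\<phi> = (\<lambda>x. integral {0..x} v)"
  define \<psi> where "\<psi> = (\<lambda>x. exp (- B * x) * (\<phi> x + A / B))"
  define \<psi>' where "\<psi>' = (\<lambda>x. exp (- B * x) * v x - B * exp (- B * x) * (\<phi> x + A / B))"
  have "(\<psi> has_vector_derivative \<psi>' t) (at t within {0..x})" if t: "t \<in> {0..x}" for t
  proof -
    have "(\<phi> has_real_derivative v t) (at t within {0..b})"
      unfolding \<phi>_def using t x by (intro integral_has_real_derivative v) auto
    then have "(\<phi> has_real_derivative v t) (at t within {0..x})"
      by (rule DERIV_subset) (use x in auto)
    then have "(\<psi> has_real_derivative \<psi>' t) (at t within {0..x})"
      unfolding \<psi>_def \<psi>'_def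
      by (auto intro!: derivative_eq_intros)
    then show ?thesis
      by (simp add: has_real_derivative_iff_has_vector_derivative)
  qed
  then have "(\<psi>' has_integral \<psi> x - \<psi> 0) {0..x}"
    by (intro fundamental_theorem_of_calculus) (use x in auto)
  moreover have "\<psi>' t \<le> 0" if "t \<in> {0..x}" for t
  proof -
    have "v t \<le> A + B * \<phi> t"
      unfolding \<phi>_def using that x by (intro ineq) auto
    with B have "v t - B * (\<phi> t + A / B) \<le> 0"
      by (simp add: algebra_simps)
    then have "exp (- B * t) * (v t - B * (\<phi> t + A / B)) \<le> 0"
      by (simp add: mult_nonneg_nonpos)
    moreover have "\<psi>' t = exp (- B * t) * (v t - B * (\<phi> t + A / B))"
      unfolding \<psi>'_def by (simp add: algebra_simps)
    ultimately show ?thesis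
      by simp
  qed
  ultimately have "\<psi> x \<le> \<psi> 0"
    using has_integral_le[of \<psi>' "\<psi> x - \<psi> 0" "{0..x}" "\<lambda>_. 0" 0] by auto
  then have "exp (- B * x) * (\<phi> x + A / B) \<le> A / B"
    unfolding \<psi>_def \<phi>_def by simp
  with B have "\<phi> x + A / B \<le> A / B * exp (B * x)"
    by (simp add: exp_minus field_simps)
  with B have "B * (\<phi> x + A / B) \<le> B * (A / B * exp (B * x))"
    by (intro mult_left_mono) auto
  with B have "A + B * \<phi> x \<le> A * exp (B * x)"
    by (simp add: distrib_left)
  then show ?thesis
    using ineq[OF x] unfolding \<phi>_def by simp
qed

lemma abs_le_sup_norm01:
  assumes "continuous_on {0..1} f" "t \<in> {0..1}"
  shows "\<bar>f t\<bar> \<le> sup_norm01 f"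
proof -
  have "bounded ((\<lambda>x. \<bar>f x\<bar>) ` {0..1})"
    using compact_continuous_image[OF continuous_on_rabs[OF assms(1)] compact_Icc]
    by (rule compact_imp_bounded)
  then show ?thesis
    unfolding sup_norm01_def using assms(2) by (intro cSUP_upper bounded_imp_bdd_above)
qed

lemma abs_inverse_kernel_le_integral:
  assumes \<beta>: "continuous_on {0..1} \<beta>" and k_kernel: "is_backstepping_kernel \<beta> k"
    and kh: "continuous_on {0..1} kh" and e_bound: "\<And>t. t \<in> {0..1} \<Longrightarrow> \<bar>k t - kh t\<bar> \<le> \<epsilon>"
    and l_kernel: "is_inverse_kernel kh l" and y: "y \<in> {0..1}"
  defines "B \<equiv> (1 + sup_norm01 \<beta>) * \<epsilon>"
  shows "\<bar>l y\<bar> \<le> (sup_norm01 \<beta> + B) + B * integral {0..y} (\<lambda>t. \<bar>l t\<bar>)"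
proof -
  have k: "continuous_on {0..1} k" and k_eq: "\<And>x. x \<in> {0..1} \<Longrightarrow> k x = - \<beta> x + conv \<beta> k x"
    using k_kernel unfolding is_backstepping_kernel_def conv_def by auto
  have l: "continuous_on {0..1} l"
    using l_kernel unfolding is_inverse_kernel_def by (rule conjunct1)
  have e: "continuous_on {0..1} (\<lambda>t. k t - kh t)"
    by (intro continuous_on_diff k kh)
  define g where "g = (\<lambda>t. (k t - kh t) - conv \<beta> (\<lambda>s. k s - kh s) t)"
  have g: "continuous_on {0..1} g"
    unfolding g_def by (rule continuous_on_diff[OF e continuous_on_conv[OF \<beta> e]])
  have \<beta>_bound: "\<bar>\<beta> t\<bar> \<le> sup_norm01 \<beta>" if "t \<in> {0..1}" for t
    using \<beta> that by (rule abs_le_sup_norm01)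
  have g_bound: "\<bar>g t\<bar> \<le> B" if "t \<in> {0..1}" for t
    using abs_conv_le_mult[OF \<beta> e that \<beta>_bound e_bound] e_bound[OF that]
    unfolding g_def B_def by (simp add: algebra_simps)
  have "l y = - \<beta> y - g y - conv g l y"
    using perturbed_resolvent_eq[OF \<beta> k kh l k_eq inverse_kernel_resolvent_eq[OF kh l_kernel] y]
    unfolding g_def by simp
  then have "\<bar>l y\<bar> \<le> \<bar>\<beta> y\<bar> + \<bar>g y\<bar> + \<bar>conv g l y\<bar>"
    by simp
  moreover have "\<bar>conv g l y\<bar> \<le> B * integral {0..y} (\<lambda>t. \<bar>l t\<bar>)"
    by (rule abs_conv_le[OF g l y g_bound])
  ultimately show ?thesis
    using \<beta>_bound[OF y] g_bound[OF y] by linarith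
qed

theorem lemma3:
  fixes \<beta> k kh l :: "real \<Rightarrow> real" and \<epsilon> :: real
  assumes "continuous_on {0..1} \<beta>"
    and "is_backstepping_kernel \<beta> k"
    and "continuous_on {0..1} kh"
    and "\<forall>x\<in>{0..1}. \<bar>k x - kh x\<bar> < \<epsilon>"
    and "is_inverse_kernel kh l"
  shows "\<forall>x\<in>{0..1}. \<bar>l x\<bar> \<le> (sup_norm01 \<beta> + (1 + sup_norm01 \<beta>) * \<epsilon>)
            * exp ((1 + sup_norm01 \<beta>) * \<epsilon> * x)"
proof
  fix x :: real assume x: "x \<in> {0..1}"
  define B where "B = (1 + sup_norm01 \<beta>) * \<epsilon>"
  have e_bound: "\<bar>k t - kh t\<bar> \<le> \<epsilon>" if "t \<in> {0..1}" for t
    using assms(4) that by fastforce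
  have "B > 0"
    using assms(4) abs_le_sup_norm01[OF assms(1), of 0] unfolding B_def by force
  have l: "continuous_on {0..1} l"
    using assms(5) unfolding is_inverse_kernel_def by (rule conjunct1)
  have "\<bar>l x\<bar> \<le> (sup_norm01 \<beta> + B) * exp (B * x)"
    by (rule gronwall_integral[OF continuous_on_rabs[OF l] \<open>B > 0\<close>
          abs_inverse_kernel_le_integral[OF assms(1-3) e_bound assms(5), folded B_def] x])
  then show "\<bar>l x\<bar> \<le> (sup_norm01 \<beta> + (1 + sup_norm01 \<beta>) * \<epsilon>) * exp ((1 + sup_norm01 \<beta>) * \<epsilon> * x)"
    unfolding B_def .
qed

end
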